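(* For any $\xi>0$, $\epsilon>0$ and $\delta>0$, there exists an $(\epsilon,\delta)$-differentially private (central model) $\left(1+\xi,\ O_\xi\!\left(\frac{m^3}{\epsilon n}\sqrt{\log\frac1\delta}\right)\right)$-approximation algorithm for the rank aggregation problem, where the hidden constant depends only on $\xi$.
   Context: Items are $[m]=\{1,\dots,m\}$; $\mathbb{S}_m$ is the set of rankings (permutations) of $[m]$, $\pi(j)$ being the position of item $j$. The Kendall tau distance is $K(\pi_1,\pi_2)=|\{(i,j):\pi_1(i)<\pi_1(j),\ \pi_2(i)>\pi_2(j)\}|$. An input is a list $\Pi=\{\pi_1,\dots,\pi_n\}$ of $n$ rankings. Define $\bar K(\sigma,\Pi)=\frac1n\sum_k K(\sigma,\pi_k)$ and $\mathrm{OPT}(\Pi)=\min_\sigma\bar K(\sigma,\Pi)$. A randomized algorithm is an $(\alpha,\beta)$-approximation algorithm for rank aggregation if for every input $\Pi$ its output $\sigma$ satisfies $\mathbb{E}[\bar K(\sigma,\Pi)]\le\alpha\,\mathrm{OPT}(\Pi)+\beta$. Two inputs are neighboring if they differ in a single ranking; an algorithm $\mathcal{M}$ is $(\epsilon,\delta)$-DP (central model) if for all neighboring $\Pi,\Pi'$ and all output sets $S$, $\Pr[\mathcal{M}(\Pi)\in S]\le e^{\epsilon}\Pr[\mathcal{M}(\Pi')\in S]+\delta$. *)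

theory Defs
  imports "HOL-Probability.Probability" "HOL-Combinatorics.Permutations"
begin

text \<open>Rankings of the items [m] = {1..m}: permutations pi with pi j the position of item j.\<close>
definition rankings :: "nat \<Rightarrow> (nat \<Rightarrow> nat) set" where
  "rankings m = {p. p permutes {1..m}}"

definition kendall :: "nat \<Rightarrow> (nat \<Rightarrow> nat) \<Rightarrow> (nat \<Rightarrow> nat) \<Rightarrow> nat" where
  "kendall m p1 p2 = card {(i, j). i \<in> {1..m} \<and> j \<in> {1..m} \<and> p1 i < p1 j \<and> p2 i > p2 j}"

definition avg_kendall :: "nat \<Rightarrow> (nat \<Rightarrow> nat) \<Rightarrow> (nat \<Rightarrow> nat) list \<Rightarrow> real" where
  "avg_kendall m s Ps = (\<Sum>k<length Ps. real (kendall m s (Ps ! k))) / real (length Ps)"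

definition OPT :: "nat \<Rightarrow> (nat \<Rightarrow> nat) list \<Rightarrow> real" where
  "OPT m Ps = Min ((\<lambda>s. avg_kendall m s Ps) ` rankings m)"

definition valid_input :: "nat \<Rightarrow> nat \<Rightarrow> (nat \<Rightarrow> nat) list \<Rightarrow> bool" where
  "valid_input m n Ps \<longleftrightarrow> length Ps = n \<and> set Ps \<subseteq> rankings m"

definition neighboring :: "(nat \<Rightarrow> nat) list \<Rightarrow> (nat \<Rightarrow> nat) list \<Rightarrow> bool" where
  "neighboring Ps Qs \<longleftrightarrow> length Ps = length Qs \<and>
     (\<exists>k < length Ps. \<forall>i < length Ps. i \<noteq> k \<longrightarrow> Ps ! i = Qs ! i)"

definition differentially_private ::
  "real \<Rightarrow> real \<Rightarrow> nat \<Rightarrow> nat \<Rightarrow> ((nat \<Rightarrow> nat) list \<Rightarrow> (nat \<Rightarrow> nat) pmf) \<Rightarrow> bool" where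
  "differentially_private eps delta m n M \<longleftrightarrow>
     (\<forall>Ps Qs S. valid_input m n Ps \<longrightarrow> valid_input m n Qs \<longrightarrow> neighboring Ps Qs \<longrightarrow>
        measure_pmf.prob (M Ps) S \<le> exp eps * measure_pmf.prob (M Qs) S + delta)"

definition approximation ::
  "real \<Rightarrow> real \<Rightarrow> nat \<Rightarrow> nat \<Rightarrow> ((nat \<Rightarrow> nat) list \<Rightarrow> (nat \<Rightarrow> nat) pmf) \<Rightarrow> bool" where
  "approximation alpha beta m n M \<longleftrightarrow>
     (\<forall>Ps. valid_input m n Ps \<longrightarrow>
        set_pmf (M Ps) \<subseteq> rankings m \<and>
        measure_pmf.expectation (M Ps) (\<lambda>s. avg_kendall m s Ps) \<le> alpha * OPT m Ps + beta)"

end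

theory Submission
  imports Defs "HOL-Combinatorics.Multiset_Permutations"
begin

text \<open>
  The mechanism returns a Kemeny ranking \<open>\<sigma>\<^sup>*\<close> with probability \<open>\<delta>\<close> and otherwise samples
  \<open>\<sigma>\<close> with probability proportional to \<open>exp (- \<beta> S \<sigma>)\<close>, where \<open>S\<close> is the total Kendall
  distance to the input and \<open>\<beta> = \<epsilon> / (2 (m\<^sup>2 + 1))\<close>. Replacing one input ranking moves \<open>S\<close>
  by at most \<open>m\<^sup>2\<close>, so the Gibbs part is \<open>\<epsilon>\<close>-private, and the mass \<open>\<delta>\<close> on \<open>\<sigma>\<^sup>*\<close> is paid
  for by the additive \<open>\<delta>\<close>.

  For utility, convexity of the log-partition function \<open>ln Z\<close> gives
  \<open>\<theta> E\<^sub>\<beta>[S] \<le> ln (Z (\<beta> - \<theta>) / Z \<beta>)\<close>. By the triangle inequality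
  \<open>\<bar>S \<sigma> - n K(\<sigma>, \<sigma>\<^sup>*)\<bar> \<le> S \<sigma>\<^sup>*\<close>, so \<open>Z \<beta>\<close> is within \<open>exp (\<plusminus>\<beta> S \<sigma>\<^sup>*)\<close> of the
  Mahonian generating function \<open>\<Prod>k<m. 1 + t + \<dots> + t\<^sup>k\<close> at \<open>t = exp (- \<beta> n)\<close>, and
  comparing \<open>t\<close> with \<open>t\<^sup>L\<close> factor by factor costs only \<open>L\<^sup>m\<close>. Taking \<open>\<theta> = \<beta> (L - 1) / L\<close>
  yields \<open>E[S] \<le> (L + 1) / (L - 1) S \<sigma>\<^sup>* + 2 m ln L / \<beta>\<close>; choosing \<open>L \<approx> 2 / \<xi>\<close> makes the
  ratio at most \<open>1 + \<xi>\<close>, and the additive error \<open>O (m\<^sup>3 ln L / (\<epsilon> n))\<close> is scaled by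
  \<open>1 - \<delta> \<le> sqrt (ln (1 / \<delta>))\<close>.
\<close>

section \<open>Inversions and the Mahonian generating function\<close>

fun inversions :: "('a \<Rightarrow> 'b::linorder) \<Rightarrow> 'a list \<Rightarrow> nat" where
  "inversions f [] = 0"
| "inversions f (x # xs) = length (filter (\<lambda>y. f y < f x) xs) + inversions f xs"

lemma inversion_pairs_Cons:
  fixes f :: "'a \<Rightarrow> 'b::linorder" and g :: "'a \<Rightarrow> 'c::linorder"
  assumes "\<And>v. v \<in> set xs \<Longrightarrow> g x < g v"
  shows "{(u, v). u \<in> set (x # xs) \<and> v \<in> set (x # xs) \<and> g u < g v \<and> f v < f u}
    = Pair x ` {v \<in> set xs. f v < f x} \<union> {(u, v). u \<in> set xs \<and> v \<in> set xs \<and> g u < g v \<and> f v < f u}"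
    (is "?pairs (x # xs) = ?new \<union> ?pairs xs")
proof (intro equalityI subsetI)
  fix p assume "p \<in> ?pairs (x # xs)"
  then obtain u v where p: "p = (u, v)" "u \<in> set (x # xs)" "v \<in> set (x # xs)"
    "g u < g v" "f v < f u" by blast
  have "v \<noteq> x"
  proof
    assume "v = x"
    then have "u \<in> set xs" using p by auto
    then show False using assms[of u] p(4) \<open>v = x\<close> by simp
  qed
  then show "p \<in> ?new \<union> ?pairs xs" using p by auto
next
  fix p assume "p \<in> ?new \<union> ?pairs xs"
  then show "p \<in> ?pairs (x # xs)" using assms by auto
qed

lemma inversions_eq_card:
  fixes g :: "'a \<Rightarrow> 'c::linorder"
  assumes "distinct xs" and "sorted_wrt (\<lambda>u v. g u < g v) xs"
  shows "inversions f xs = card {(u, v). u \<in> set xs \<and> v \<in> set xs \<and> g u < g v \<and> f v < f u}"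
  using assms
proof (induction xs)
  case Nil
  then show ?case by simp
next
  case (Cons x xs)
  let ?pairs = "\<lambda>A. {(u, v). u \<in> A \<and> v \<in> A \<and> g u < g v \<and> f v < f u}"
  let ?new = "Pair x ` {v \<in> set xs. f v < f x}"
  have split: "?pairs (set (x # xs)) = ?new \<union> ?pairs (set xs)"
    by (rule inversion_pairs_Cons) (use Cons.prems in simp)
  have "finite (?pairs (set xs))"
    by (rule finite_subset[of _ "set xs \<times> set xs"]) auto
  moreover have "?new \<inter> ?pairs (set xs) = {}"
    using Cons.prems by auto
  ultimately have card_split: "card (?pairs (set (x # xs))) = card ?new + card (?pairs (set xs))"
    unfolding split by (simp add: card_Un_disjoint)
  have "card ?new = card {v \<in> set xs. f v < f x}"
    by (simp add: card_image inj_on_def)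
  also have "\<dots> = length (filter (\<lambda>y. f y < f x) xs)"
    using Cons.prems by (simp add: distinct_length_filter Int_def conj_commute)
  finally have card_new: "card ?new = length (filter (\<lambda>y. f y < f x) xs)" .
  have "inversions f xs = card (?pairs (set xs))"
    using Cons.IH Cons.prems by simp
  then have "inversions f (x # xs) = card ?new + card (?pairs (set xs))"
    by (simp only: inversions.simps card_new)
  with card_split show ?case by linarith
qed

lemma bij_betw_card_less:
  fixes f :: "'a \<Rightarrow> 'b::linorder"
  assumes "finite A" and "inj_on f A"
  shows "bij_betw (\<lambda>x. card {y \<in> A. f y < f x}) A {..<card A}"
proof -
  let ?r = "\<lambda>x. card {y \<in> A. f y < f x}"
  have r_less: "?r x < ?r x'" if "x \<in> A" and "f x < f x'" for x x'
  proof (rule psubset_card_mono)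
    show "finite {y \<in> A. f y < f x'}" using assms(1) by simp
    show "{y \<in> A. f y < f x} \<subset> {y \<in> A. f y < f x'}"
      using that by (auto intro: order.strict_trans)
  qed
  have "inj_on ?r A"
  proof (rule inj_onI)
    fix x x' assume x: "x \<in> A" and x': "x' \<in> A" and eq: "?r x = ?r x'"
    show "x = x'"
    proof (cases "f x" "f x'" rule: linorder_cases)
      case less
      then show ?thesis using r_less[OF x less] eq by simp
    next
      case equal
      then show ?thesis using assms(2) x x' by (simp add: inj_on_eq_iff)
    next
      case greater
      then show ?thesis using r_less[OF x' greater] eq by simp
    qed
  qed
  moreover have "?r x < card A" if "x \<in> A" for x
  proof (rule psubset_card_mono)
    show "{y \<in> A. f y < f x} \<subset> A" using that by auto
  qed (rule assms(1))
  ultimately show ?thesis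
    by (simp add: bij_betw_def card_image card_subset_eq image_subset_iff)
qed

definition mahonian_gf :: "nat \<Rightarrow> 'a::comm_semiring_1 \<Rightarrow> 'a" where
  "mahonian_gf n t = (\<Prod>k<n. \<Sum>j\<le>k. t ^ j)"

lemma inversions_Cons_permutations_of_set:
  assumes "ys \<in> permutations_of_set (A - {x})"
  shows "inversions f (x # ys) = card {y \<in> A. f y < f x} + inversions f ys"
proof -
  have "length (filter (\<lambda>y. f y < f x) ys) = card ({y. f y < f x} \<inter> (A - {x}))"
    using assms by (simp add: distinct_length_filter permutations_of_set_def)
  also have "\<dots> = card {y \<in> A. f y < f x}"
    by (rule arg_cong[where f = card]) auto
  finally show ?thesis by simp
qed

lemma sum_power_inversions:
  fixes t :: "'c::comm_semiring_1" and f :: "'a \<Rightarrow> 'b::linorder"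
  assumes "finite A" and "inj_on f A"
  shows "(\<Sum>xs\<in>permutations_of_set A. t ^ inversions f xs) = mahonian_gf (card A) t"
  using assms
proof (induction "card A" arbitrary: A)
  case 0
  then show ?case by (simp add: mahonian_gf_def)
next
  case (Suc k)
  define r where "r x = card {y \<in> A. f y < f x}" for x
  have "A \<noteq> {}" using Suc.hyps by auto
  have head: "(\<Sum>ys\<in>permutations_of_set (A - {x}). t ^ inversions f (x # ys))
      = t ^ r x * mahonian_gf k t" if "x \<in> A" for x
  proof -
    have "(\<Sum>ys\<in>permutations_of_set (A - {x}). t ^ inversions f (x # ys))
        = (\<Sum>ys\<in>permutations_of_set (A - {x}). t ^ r x * t ^ inversions f ys)"
      by (rule sum.cong[OF refl]) (simp only: inversions_Cons_permutations_of_set r_def power_add)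
    also have "\<dots> = t ^ r x * (\<Sum>ys\<in>permutations_of_set (A - {x}). t ^ inversions f ys)"
      by (rule sum_distrib_left[symmetric])
    also have "(\<Sum>ys\<in>permutations_of_set (A - {x}). t ^ inversions f ys) = mahonian_gf k t"
    proof -
      have "card (A - {x}) = k" using Suc.hyps(2) Suc.prems(1) that by simp
      then show ?thesis
        using Suc.hyps(1)[of "A - {x}"] Suc.prems that by (simp add: inj_on_diff)
    qed
    finally show ?thesis .
  qed
  have "(\<Sum>xs\<in>permutations_of_set A. t ^ inversions f xs)
      = (\<Sum>x\<in>A. \<Sum>xs\<in>(#) x ` permutations_of_set (A - {x}). t ^ inversions f xs)"
    unfolding permutations_of_set_nonempty[OF \<open>A \<noteq> {}\<close>]
    by (rule sum.UNION_disjoint) (use Suc.prems in auto)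
  also have "\<dots> = (\<Sum>x\<in>A. \<Sum>ys\<in>permutations_of_set (A - {x}). t ^ inversions f (x # ys))"
    by (rule sum.cong[OF refl]) (simp add: sum.reindex inj_on_def)
  also have "\<dots> = (\<Sum>x\<in>A. t ^ r x) * mahonian_gf k t"
    unfolding sum_distrib_right by (rule sum.cong[OF refl head])
  also have "(\<Sum>x\<in>A. t ^ r x) = (\<Sum>j\<le>k. t ^ j)"
    using sum.reindex_bij_betw[OF bij_betw_card_less[OF Suc.prems], of "power t"]
    by (simp add: r_def lessThan_Suc_atMost flip: Suc.hyps(2))
  finally show ?case
    using Suc.hyps(2)[symmetric] by (simp add: mahonian_gf_def mult.commute)
qed

lemma sum_power_le_blocks:
  fixes s :: real
  assumes "0 \<le> s" and "s \<le> 1"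
  shows "(\<Sum>j<i * L. s ^ j) \<le> real L * (\<Sum>q<i. (s ^ L) ^ q)"
proof -
  have "(\<Sum>j\<in>{q * L..<q * L + L}. s ^ j) \<le> real L * (s ^ L) ^ q" for q
  proof -
    have "(\<Sum>j\<in>{q * L..<q * L + L}. s ^ j) \<le> (\<Sum>j\<in>{q * L..<q * L + L}. s ^ (q * L))"
      by (rule sum_mono) (use assms in \<open>auto intro: power_decreasing\<close>)
    then show ?thesis
      by (simp add: power_mult mult.commute)
  qed
  then have "(\<Sum>q<i. \<Sum>j\<in>{q * L..<q * L + L}. s ^ j) \<le> (\<Sum>q<i. real L * (s ^ L) ^ q)"
    by (rule sum_mono)
  then show ?thesis
    by (simp add: sum.nat_group sum_distrib_left)
qed

lemma mahonian_gf_le_power: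
  fixes s :: real
  assumes "0 \<le> s" and "s \<le> 1" and "L \<ge> 1"
  shows "mahonian_gf n s \<le> real L ^ n * mahonian_gf n (s ^ L)"
proof -
  have "(\<Sum>j\<le>k. s ^ j) \<le> real L * (\<Sum>q\<le>k. (s ^ L) ^ q)" for k
  proof -
    have "(\<Sum>j\<le>k. s ^ j) \<le> (\<Sum>j<Suc k * L. s ^ j)"
    proof (rule sum_mono2)
      have "Suc k * 1 \<le> Suc k * L" using assms(3) by (rule mult_le_mono2)
      then show "{..k} \<subseteq> {..<Suc k * L}" by auto
    qed (use assms in auto)
    also have "\<dots> \<le> real L * (\<Sum>q\<le>k. (s ^ L) ^ q)"
      using sum_power_le_blocks[OF assms(1,2), of "Suc k" L] by (simp add: lessThan_Suc_atMost)
    finally show ?thesis .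
  qed
  moreover have "0 \<le> (\<Sum>j\<le>k. s ^ j)" for k
    using assms(1) by (simp add: sum_nonneg)
  ultimately have "(\<Prod>k<n. \<Sum>j\<le>k. s ^ j) \<le> (\<Prod>k<n. real L * (\<Sum>q\<le>k. (s ^ L) ^ q))"
    by (simp add: prod_mono)
  also have "\<dots> = real L ^ n * (\<Prod>k<n. \<Sum>q\<le>k. (s ^ L) ^ q)"
    by (simp add: prod.distrib)
  finally show ?thesis
    unfolding mahonian_gf_def .
qed

section \<open>Kendall tau distance\<close>

lemma finite_rankings: "finite (rankings m)"
  unfolding rankings_def by (rule finite_permutations) simp

lemma rankings_nonempty: "rankings m \<noteq> {}"
  unfolding rankings_def using permutes_id by blast

definition ranking_list :: "nat \<Rightarrow> (nat \<Rightarrow> nat) \<Rightarrow> nat list" where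
  "ranking_list m s = map (inv s) [1..<Suc m]"

lemma ranking_list_in_permutations_of_set:
  assumes "s \<in> rankings m"
  shows "ranking_list m s \<in> permutations_of_set {1..m}"
proof -
  have perm: "inv s permutes {1..m}"
    using assms by (simp add: rankings_def permutes_inv)
  have "set (ranking_list m s) = inv s ` {1..m}"
    by (simp only: ranking_list_def set_map set_upt atLeastLessThanSuc_atLeastAtMost)
  also have "\<dots> = {1..m}"
    by (rule permutes_image[OF perm])
  finally show ?thesis
    using permutes_inj_on[OF perm]
    by (simp add: permutations_of_set_def ranking_list_def distinct_map atLeastLessThanSuc_atLeastAtMost)
qed

lemma inj_on_ranking_list: "inj_on (ranking_list m) (rankings m)"
proof (rule inj_onI)
  fix s s' assume "s \<in> rankings m" "s' \<in> rankings m" and eq: "ranking_list m s = ranking_list m s'"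
  then have perm: "inv s permutes {1..m}" "inv s' permutes {1..m}"
    by (simp_all add: rankings_def permutes_inv)
  have "inv s i = inv s' i" for i
  proof (cases "i \<in> {1..m}")
    case True
    then show ?thesis
      using eq by (simp only: ranking_list_def map_eq_conv set_upt atLeastLessThanSuc_atLeastAtMost)
  next
    case False
    then show ?thesis using perm by (simp add: permutes_not_in)
  qed
  then have "inv s = inv s'" ..
  then show "s = s'"
    using \<open>s \<in> rankings m\<close> \<open>s' \<in> rankings m\<close>
    by (metis rankings_def mem_Collect_eq permutes_inv_inv)
qed

lemma bij_betw_ranking_list: "bij_betw (ranking_list m) (rankings m) (permutations_of_set {1..m})"
proof -
  have "ranking_list m ` rankings m \<subseteq> permutations_of_set {1..m}"
    using ranking_list_in_permutations_of_set by auto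
  moreover have "card (ranking_list m ` rankings m) = card (permutations_of_set {1..m})"
  proof -
    have "card (rankings m) = fact m"
      unfolding rankings_def by (rule card_permutations) simp_all
    then show ?thesis
      by (simp add: card_image[OF inj_on_ranking_list])
  qed
  ultimately show ?thesis
    using inj_on_ranking_list by (simp add: bij_betw_def card_subset_eq)
qed

lemma kendall_eq_inversions:
  assumes "s \<in> rankings m"
  shows "kendall m s p = inversions p (ranking_list m s)"
proof -
  have perm: "s permutes {1..m}"
    using assms by (simp add: rankings_def)
  have "ranking_list m s \<in> permutations_of_set {1..m}"
    by (rule ranking_list_in_permutations_of_set[OF assms])
  moreover have "sorted_wrt (\<lambda>u v. s u < s v) (ranking_list m s)"
    unfolding ranking_list_def sorted_wrt_map
    by (rule sorted_wrt_mono_rel[OF _ sorted_wrt_upt]) (simp add: permutes_inverses(1)[OF perm])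
  ultimately show ?thesis
    by (simp add: inversions_eq_card permutations_of_set_def kendall_def)
qed

lemma sum_power_kendall:
  fixes t :: "'a::comm_semiring_1"
  assumes "p \<in> rankings m"
  shows "(\<Sum>s\<in>rankings m. t ^ kendall m s p) = mahonian_gf m t"
proof -
  have "(\<Sum>s\<in>rankings m. t ^ kendall m s p) = (\<Sum>s\<in>rankings m. t ^ inversions p (ranking_list m s))"
    by (simp add: kendall_eq_inversions)
  also have "\<dots> = (\<Sum>xs\<in>permutations_of_set {1..m}. t ^ inversions p xs)"
    by (rule sum.reindex_bij_betw[OF bij_betw_ranking_list])
  also have "\<dots> = mahonian_gf m t"
    using assms by (simp add: sum_power_inversions rankings_def permutes_inj_on)
  finally show ?thesis .
qed

lemma kendall_commute: "kendall m p q = kendall m q p"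
proof -
  have "{(i, j). i \<in> {1..m} \<and> j \<in> {1..m} \<and> q i < q j \<and> p i > p j}
      = prod.swap ` {(i, j). i \<in> {1..m} \<and> j \<in> {1..m} \<and> p i < p j \<and> q i > q j}"
    by auto
  then show ?thesis
    unfolding kendall_def by (simp add: card_image)
qed

lemma kendall_le_square: "kendall m p q \<le> m * m"
proof -
  have "kendall m p q \<le> card ({1..m} \<times> {1..m})"
    unfolding kendall_def by (rule card_mono) auto
  then show ?thesis by simp
qed

lemma kendall_triangle:
  assumes "q \<in> rankings m"
  shows "kendall m p r \<le> kendall m p q + kendall m q r"
proof -
  let ?D = "\<lambda>p q. {(i, j). i \<in> {1..m} \<and> j \<in> {1..m} \<and> p i < p j \<and> q i > q j}"
  have "inj_on q {1..m}"
    using assms by (simp add: rankings_def permutes_inj_on)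
  have "?D p r \<subseteq> ?D p q \<union> ?D q r"
  proof
    fix ij assume "ij \<in> ?D p r"
    then obtain i j where ij: "ij = (i, j)" "i \<in> {1..m}" "j \<in> {1..m}" "p i < p j" "r i > r j"
      by blast
    then have "q i \<noteq> q j"
      using \<open>inj_on q {1..m}\<close> by (metis inj_on_eq_iff less_irrefl)
    then show "ij \<in> ?D p q \<union> ?D q r"
      using ij by (cases "q i < q j") auto
  qed
  then have "card (?D p r) \<le> card (?D p q \<union> ?D q r)"
    by (rule card_mono[rotated]) (rule finite_subset[of _ "{1..m} \<times> {1..m}"], auto)
  also have "\<dots> \<le> card (?D p q) + card (?D q r)"
    by (rule card_Un_le)
  finally show ?thesis
    unfolding kendall_def .
qed

section \<open>Gibbs distributions\<close>

definition gibbs_partition :: "'a set \<Rightarrow> ('a \<Rightarrow> real) \<Rightarrow> real \<Rightarrow> real" where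
  "gibbs_partition R S \<beta> = (\<Sum>x\<in>R. exp (- \<beta> * S x))"

definition gibbs_pmf :: "'a set \<Rightarrow> ('a \<Rightarrow> real) \<Rightarrow> real \<Rightarrow> 'a pmf" where
  "gibbs_pmf R S \<beta> =
     embed_pmf (\<lambda>x. if x \<in> R then exp (- \<beta> * S x) / gibbs_partition R S \<beta> else 0)"

lemma gibbs_partition_pos: "finite R \<Longrightarrow> R \<noteq> {} \<Longrightarrow> 0 < gibbs_partition R S \<beta>"
  unfolding gibbs_partition_def by (intro sum_pos) auto

lemma pmf_gibbs_pmf:
  assumes "finite R" and "R \<noteq> {}"
  shows "pmf (gibbs_pmf R S \<beta>) x = (if x \<in> R then exp (- \<beta> * S x) / gibbs_partition R S \<beta> else 0)"
proof -
  let ?f = "\<lambda>x. if x \<in> R then exp (- \<beta> * S x) / gibbs_partition R S \<beta> else 0"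
  have nonneg: "0 \<le> ?f x" for x
    using gibbs_partition_pos[OF assms, of S \<beta>] by simp
  have "(\<integral>\<^sup>+x. ennreal (?f x) \<partial>count_space UNIV) = (\<Sum>x\<in>R. ennreal (?f x))"
    by (rule nn_integral_count_space') (use assms in auto)
  also have "\<dots> = ennreal (\<Sum>x\<in>R. ?f x)"
    using gibbs_partition_pos[OF assms, of S \<beta>] by (intro sum_ennreal divide_nonneg_pos) auto
  also have "(\<Sum>x\<in>R. ?f x) = 1"
    using gibbs_partition_pos[OF assms, of S \<beta>]
    by (simp add: sum_divide_distrib[symmetric] gibbs_partition_def)
  finally show ?thesis
    unfolding gibbs_pmf_def using nonneg by (simp add: pmf_embed_pmf)
qed

lemma set_pmf_gibbs_pmf: "finite R \<Longrightarrow> R \<noteq> {} \<Longrightarrow> set_pmf (gibbs_pmf R S \<beta>) = R"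
  using gibbs_partition_pos[of R S \<beta>] by (auto simp: set_pmf_eq pmf_gibbs_pmf)

lemma expectation_gibbs_pmf:
  assumes "finite R" and "R \<noteq> {}"
  shows "measure_pmf.expectation (gibbs_pmf R S \<beta>) f
    = (\<Sum>x\<in>R. f x * exp (- \<beta> * S x)) / gibbs_partition R S \<beta>"
  using assms
  by (subst integral_measure_pmf_real[of R])
     (auto simp: set_pmf_gibbs_pmf pmf_gibbs_pmf sum_divide_distrib)

lemma pmf_gibbs_pmf_le_exp:
  assumes "finite R" and "R \<noteq> {}" and "0 \<le> \<beta>"
    and close: "\<And>x. x \<in> R \<Longrightarrow> \<bar>S x - S' x\<bar> \<le> \<Delta>"
  shows "pmf (gibbs_pmf R S \<beta>) x \<le> exp (2 * \<beta> * \<Delta>) * pmf (gibbs_pmf R S' \<beta>) x"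
proof (cases "x \<in> R")
  case True
  let ?Z = "gibbs_partition R S \<beta>" and ?Z' = "gibbs_partition R S' \<beta>" and ?e = "exp (\<beta> * \<Delta>)"
  have weight_le: "exp (- \<beta> * a) \<le> ?e * exp (- \<beta> * b)" if "\<bar>a - b\<bar> \<le> \<Delta>" for a b
  proof -
    have "\<beta> * (b - a) \<le> \<beta> * \<Delta>"
      using that assms(3) by (intro mult_left_mono) auto
    then show ?thesis
      by (simp add: exp_add[symmetric] algebra_simps)
  qed
  have "?Z' \<le> ?e * ?Z"
    unfolding gibbs_partition_def sum_distrib_left
    by (rule sum_mono) (rule weight_le, use close in \<open>auto simp: abs_minus_commute\<close>)
  then have "exp (- \<beta> * S x) / ?Z \<le> (?e * exp (- \<beta> * S' x)) / (?Z' / ?e)"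
    using weight_le[OF close[OF True]] gibbs_partition_pos[OF assms(1,2), of S' \<beta>]
    by (intro frac_le) (simp_all add: field_simps)
  also have "\<dots> = (?e * ?e) * (exp (- \<beta> * S' x) / ?Z')"
    by (simp add: field_simps)
  also have "?e * ?e = exp (2 * \<beta> * \<Delta>)"
    by (simp add: exp_add[symmetric])
  finally show ?thesis
    using True assms(1,2) by (simp add: pmf_gibbs_pmf)
qed (use assms in \<open>simp add: pmf_gibbs_pmf\<close>)

lemma gibbs_expectation_le_ln_partition_ratio:
  assumes "finite R" and "R \<noteq> {}"
  shows "\<theta> * measure_pmf.expectation (gibbs_pmf R S \<beta>) S
    \<le> ln (gibbs_partition R S (\<beta> - \<theta>) / gibbs_partition R S \<beta>)"
proof -
  let ?Z = "gibbs_partition R S \<beta>" and ?Z' = "gibbs_partition R S (\<beta> - \<theta>)"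
  define c where "c = ln (?Z' / ?Z)"
  have Z: "0 < ?Z" "0 < ?Z'"
    using gibbs_partition_pos[OF assms] by auto
  have exp_c: "exp (- c) * ?Z' = ?Z"
    using Z by (simp add: c_def exp_minus)
  \<comment> \<open>\<open>\<theta> y \<le> exp (\<theta> y - c) + c - 1\<close>, weighted by \<open>exp (- \<beta> y)\<close>\<close>
  have pointwise: "\<theta> * S x * exp (- \<beta> * S x)
      \<le> exp (- c) * exp (- (\<beta> - \<theta>) * S x) + (c - 1) * exp (- \<beta> * S x)" for x
  proof -
    have "\<theta> * S x \<le> exp (\<theta> * S x - c) + c - 1"
      using exp_ge_add_one_self[of "\<theta> * S x - c"] by linarith
    then have "\<theta> * S x * exp (- \<beta> * S x) \<le> (exp (\<theta> * S x - c) + c - 1) * exp (- \<beta> * S x)"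
      by (rule mult_right_mono) simp
    also have "\<dots> = exp (\<theta> * S x - c) * exp (- \<beta> * S x) + (c - 1) * exp (- \<beta> * S x)"
      by algebra
    also have "exp (\<theta> * S x - c) * exp (- \<beta> * S x) = exp (- c) * exp (- (\<beta> - \<theta>) * S x)"
      by (simp only: mult_exp_exp) (simp add: algebra_simps)
    finally show ?thesis .
  qed
  have "\<theta> * (\<Sum>x\<in>R. S x * exp (- \<beta> * S x)) = (\<Sum>x\<in>R. \<theta> * S x * exp (- \<beta> * S x))"
    by (simp add: sum_distrib_left mult.assoc)
  also have "\<dots> \<le> (\<Sum>x\<in>R. exp (- c) * exp (- (\<beta> - \<theta>) * S x) + (c - 1) * exp (- \<beta> * S x))"
    by (rule sum_mono) (rule pointwise)
  also have "\<dots> = exp (- c) * ?Z' + (c - 1) * ?Z"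
    by (simp add: gibbs_partition_def sum.distrib sum_distrib_left)
  also have "\<dots> = c * ?Z"
    using exp_c by (simp add: algebra_simps)
  finally have "\<theta> * (\<Sum>x\<in>R. S x * exp (- \<beta> * S x)) / ?Z \<le> c"
    using Z(1) by (simp add: pos_divide_le_eq)
  then show ?thesis
    using assms by (simp add: expectation_gibbs_pmf c_def)
qed

lemma gibbs_partition_bounds:
  fixes S :: "'a \<Rightarrow> real" and K :: "'a \<Rightarrow> nat" and c D :: real
  assumes "0 \<le> \<beta>" and near: "\<And>x. x \<in> R \<Longrightarrow> \<bar>S x - c * K x\<bar> \<le> D"
  shows "exp (- \<beta> * D) * (\<Sum>x\<in>R. exp (- \<beta> * c) ^ K x) \<le> gibbs_partition R S \<beta>"
    and "gibbs_partition R S \<beta> \<le> exp (\<beta> * D) * (\<Sum>x\<in>R. exp (- \<beta> * c) ^ K x)"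
proof -
  have power: "exp (- \<beta> * c) ^ K x = exp (- \<beta> * (c * K x))" for x
    by (simp add: exp_of_nat2_mult[symmetric] mult.assoc)
  have lower: "- \<beta> * D + - \<beta> * (c * K x) \<le> - \<beta> * S x" if "x \<in> R" for x
  proof -
    have "\<beta> * (S x - c * K x) \<le> \<beta> * D"
      using near[OF that] assms(1) by (intro mult_left_mono) (auto simp: abs_le_iff)
    then show ?thesis by (simp add: algebra_simps)
  qed
  have upper: "- \<beta> * S x \<le> \<beta> * D + - \<beta> * (c * K x)" if "x \<in> R" for x
  proof -
    have "\<beta> * (c * K x - S x) \<le> \<beta> * D"
      using near[OF that] assms(1) by (intro mult_left_mono) (auto simp: abs_le_iff)
    then show ?thesis by (simp add: algebra_simps)
  qed
  show "exp (- \<beta> * D) * (\<Sum>x\<in>R. exp (- \<beta> * c) ^ K x) \<le> gibbs_partition R S \<beta>"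
    unfolding gibbs_partition_def sum_distrib_left power mult_exp_exp
    using lower by (intro sum_mono) simp
  show "gibbs_partition R S \<beta> \<le> exp (\<beta> * D) * (\<Sum>x\<in>R. exp (- \<beta> * c) ^ K x)"
    unfolding gibbs_partition_def sum_distrib_left power mult_exp_exp
    using upper by (intro sum_mono) simp
qed

section \<open>Mixtures of distributions\<close>

definition mix_pmf :: "real \<Rightarrow> 'a pmf \<Rightarrow> 'a pmf \<Rightarrow> 'a pmf" where
  "mix_pmf a p q = bind_pmf (bernoulli_pmf a) (\<lambda>b. if b then p else q)"

lemma pmf_mix_pmf: "0 \<le> a \<Longrightarrow> a \<le> 1 \<Longrightarrow> pmf (mix_pmf a p q) x = a * pmf p x + (1 - a) * pmf q x"
  by (simp add: mix_pmf_def pmf_bind)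

lemma set_pmf_mix_pmf_subset: "set_pmf (mix_pmf a p q) \<subseteq> set_pmf p \<union> set_pmf q"
  by (auto simp: mix_pmf_def split: if_splits)

lemma expectation_mix_pmf:
  assumes "0 \<le> a" and "a \<le> 1" and "finite (set_pmf p)" and "finite (set_pmf q)"
  shows "measure_pmf.expectation (mix_pmf a p q) f
    = a * measure_pmf.expectation p f + (1 - a) * measure_pmf.expectation q f"
proof -
  let ?A = "set_pmf p \<union> set_pmf q"
  have "finite ?A" using assms(3,4) by simp
  then have as_sum: "measure_pmf.expectation r f = (\<Sum>x\<in>?A. f x * pmf r x)"
    if "set_pmf r \<subseteq> ?A" for r
    using that by (intro integral_measure_pmf_real) auto
  have "measure_pmf.expectation (mix_pmf a p q) f = (\<Sum>x\<in>?A. f x * pmf (mix_pmf a p q) x)"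
    by (rule as_sum[OF set_pmf_mix_pmf_subset])
  also have "\<dots> = (\<Sum>x\<in>?A. a * (f x * pmf p x) + (1 - a) * (f x * pmf q x))"
    using assms(1,2) by (intro sum.cong) (simp_all add: pmf_mix_pmf algebra_simps)
  also have "\<dots> = a * (\<Sum>x\<in>?A. f x * pmf p x) + (1 - a) * (\<Sum>x\<in>?A. f x * pmf q x)"
    by (simp add: sum.distrib sum_distrib_left)
  finally show ?thesis
    by (simp add: as_sum)
qed

lemma measure_pmf_prob_le_of_pmf_le:
  assumes "finite (set_pmf p)" and "0 \<le> a" and "0 \<le> b"
    and le: "\<And>x. pmf p x \<le> a * pmf q x + b * pmf r x"
  shows "measure_pmf.prob p S \<le> a * measure_pmf.prob q S + b * measure_pmf.prob r S"
proof -
  let ?A = "S \<inter> set_pmf p"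
  have "finite ?A" using assms(1) by simp
  have "measure_pmf.prob p S = measure_pmf.prob p ?A"
    by (rule measure_Int_set_pmf[symmetric])
  also have "\<dots> = (\<Sum>x\<in>?A. pmf p x)"
    by (rule measure_measure_pmf_finite[OF \<open>finite ?A\<close>])
  also have "\<dots> \<le> (\<Sum>x\<in>?A. a * pmf q x + b * pmf r x)"
    by (rule sum_mono) (rule le)
  also have "\<dots> = a * measure_pmf.prob q ?A + b * measure_pmf.prob r ?A"
    using \<open>finite ?A\<close> by (simp add: sum.distrib sum_distrib_left measure_measure_pmf_finite)
  also have "\<dots> \<le> a * measure_pmf.prob q S + b * measure_pmf.prob r S"
    using assms(2,3) by (intro add_mono mult_left_mono measure_pmf.finite_measure_mono) auto
  finally show ?thesis .
qed

lemma prob_mix_pmf_le: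
  assumes "0 \<le> a" and "a \<le> 1" and "0 \<le> c"
    and "finite (set_pmf r)" and "finite (set_pmf p)"
    and le: "\<And>x. pmf p x \<le> c * pmf q x"
  shows "measure_pmf.prob (mix_pmf a r p) S \<le> c * measure_pmf.prob (mix_pmf a r' q) S + a"
proof -
  have "pmf (mix_pmf a r p) x \<le> c * pmf (mix_pmf a r' q) x + a * pmf r x" for x
  proof -
    have "(1 - a) * pmf p x \<le> (1 - a) * (c * pmf q x)"
      using assms(2) by (intro mult_left_mono[OF le]) simp
    also have "\<dots> = c * ((1 - a) * pmf q x)"
      by (simp add: mult.left_commute)
    also have "\<dots> \<le> c * pmf (mix_pmf a r' q) x"
      using assms by (intro mult_left_mono) (simp_all add: pmf_mix_pmf)
    finally show ?thesis
      using assms(1,2) by (simp add: pmf_mix_pmf)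
  qed
  then have "measure_pmf.prob (mix_pmf a r p) S
      \<le> c * measure_pmf.prob (mix_pmf a r' q) S + a * measure_pmf.prob r S"
    using assms(1,3) finite_subset[OF set_pmf_mix_pmf_subset[of a r p]] assms(4,5)
    by (intro measure_pmf_prob_le_of_pmf_le) auto
  also have "a * measure_pmf.prob r S \<le> a"
    using assms(1) by (simp add: mult_left_le)
  finally show ?thesis by simp
qed

section \<open>Kemeny rankings\<close>

definition total_kendall :: "nat \<Rightarrow> (nat \<Rightarrow> nat) list \<Rightarrow> (nat \<Rightarrow> nat) \<Rightarrow> real" where
  "total_kendall m Ps s = (\<Sum>k<length Ps. real (kendall m s (Ps ! k)))"

lemma avg_kendall_eq_total_kendall: "avg_kendall m s Ps = total_kendall m Ps s / length Ps"
  unfolding avg_kendall_def total_kendall_def ..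

lemma total_kendall_nonneg: "0 \<le> total_kendall m Ps s"
  unfolding total_kendall_def by (simp add: sum_nonneg)

definition kemeny_ranking :: "nat \<Rightarrow> (nat \<Rightarrow> nat) list \<Rightarrow> (nat \<Rightarrow> nat)" where
  "kemeny_ranking m Ps = arg_min_on (total_kendall m Ps) (rankings m)"

lemma kemeny_ranking_in_rankings: "kemeny_ranking m Ps \<in> rankings m"
  unfolding kemeny_ranking_def using finite_rankings rankings_nonempty
  by (intro arg_min_if_finite) auto

lemma total_kendall_kemeny_ranking_le:
  assumes "s \<in> rankings m"
  shows "total_kendall m Ps (kemeny_ranking m Ps) \<le> total_kendall m Ps s"
  unfolding kemeny_ranking_def
  by (rule arg_min_least[where f = "total_kendall m Ps"]) (use finite_rankings rankings_nonempty assms in auto)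

lemma OPT_eq_kemeny_ranking: "OPT m Ps = avg_kendall m (kemeny_ranking m Ps) Ps"
  unfolding OPT_def
proof (rule Min_eqI)
  show "finite ((\<lambda>s. avg_kendall m s Ps) ` rankings m)"
    using finite_rankings by simp
  show "avg_kendall m (kemeny_ranking m Ps) Ps \<in> (\<lambda>s. avg_kendall m s Ps) ` rankings m"
    using kemeny_ranking_in_rankings by simp
next
  fix y assume "y \<in> (\<lambda>s. avg_kendall m s Ps) ` rankings m"
  then show "avg_kendall m (kemeny_ranking m Ps) Ps \<le> y"
    by (auto simp: avg_kendall_eq_total_kendall intro: divide_right_mono total_kendall_kemeny_ranking_le)
qed

lemma OPT_nonneg: "0 \<le> OPT m Ps"
  by (simp add: OPT_eq_kemeny_ranking avg_kendall_eq_total_kendall total_kendall_nonneg)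

lemma total_kendall_neighboring:
  assumes "neighboring Ps Qs"
  shows "\<bar>total_kendall m Ps s - total_kendall m Qs s\<bar> \<le> real m ^ 2"
proof -
  obtain k where len: "length Qs = length Ps" and k: "k < length Ps"
    and same: "\<And>i. i < length Ps \<Longrightarrow> i \<noteq> k \<Longrightarrow> Ps ! i = Qs ! i"
    using assms unfolding neighboring_def by auto
  define rest where "rest = (\<Sum>i\<in>{..<length Ps} - {k}. real (kendall m s (Ps ! i)))"
  have split: "total_kendall m Xs s = real (kendall m s (Xs ! k)) + rest"
    if "Xs \<in> {Ps, Qs}" for Xs
  proof -
    have "total_kendall m Xs s
        = real (kendall m s (Xs ! k)) + (\<Sum>i\<in>{..<length Ps} - {k}. real (kendall m s (Xs ! i)))"
      unfolding total_kendall_def using that len k by (auto intro: sum.remove)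
    also have "(\<Sum>i\<in>{..<length Ps} - {k}. real (kendall m s (Xs ! i))) = rest"
      unfolding rest_def using that same by (auto intro: sum.cong)
    finally show ?thesis .
  qed
  have bound: "0 \<le> real (kendall m s p) \<and> real (kendall m s p) \<le> real m ^ 2" for p
    using kendall_le_square[of m s p] by (simp add: power2_eq_square flip: of_nat_mult)
  have "total_kendall m Ps s - total_kendall m Qs s
      = real (kendall m s (Ps ! k)) - real (kendall m s (Qs ! k))"
    using split[of Ps] split[of Qs] by simp
  then show ?thesis
    using bound[of "Ps ! k"] bound[of "Qs ! k"] unfolding abs_le_iff by linarith
qed

lemma total_kendall_near_center:
  assumes "valid_input m n Ps" and "p \<in> rankings m"
  shows "\<bar>total_kendall m Ps s - real n * real (kendall m s p)\<bar> \<le> total_kendall m Ps p"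
proof -
  have len: "length Ps = n" and voters: "\<And>k. k < n \<Longrightarrow> Ps ! k \<in> rankings m"
    using assms(1) by (auto simp: valid_input_def)
  have "real n * kendall m s p = (\<Sum>k<n. real (kendall m s p))"
    by simp
  also have "\<dots> \<le> (\<Sum>k<n. real (kendall m s (Ps ! k)) + kendall m p (Ps ! k))"
  proof (rule sum_mono)
    fix k assume "k \<in> {..<n}"
    then have "kendall m s p \<le> kendall m s (Ps ! k) + kendall m p (Ps ! k)"
      using kendall_triangle[OF voters, of k s p] by (simp add: kendall_commute)
    then show "real (kendall m s p) \<le> real (kendall m s (Ps ! k)) + kendall m p (Ps ! k)"
      by (metis of_nat_add of_nat_le_iff)
  qed
  moreover have "(\<Sum>k<n. real (kendall m s (Ps ! k))) \<le> (\<Sum>k<n. real (kendall m s p) + kendall m p (Ps ! k))"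
  proof (rule sum_mono)
    fix k
    have "kendall m s (Ps ! k) \<le> kendall m s p + kendall m p (Ps ! k)"
      by (rule kendall_triangle[OF assms(2)])
    then show "real (kendall m s (Ps ! k)) \<le> real (kendall m s p) + kendall m p (Ps ! k)"
      by (metis of_nat_add of_nat_le_iff)
  qed
  ultimately show ?thesis
    unfolding total_kendall_def len by (simp add: sum.distrib abs_le_iff)
qed

section \<open>The private aggregation mechanism\<close>

definition private_rank_aggregation :: "real \<Rightarrow> real \<Rightarrow> nat \<Rightarrow> (nat \<Rightarrow> nat) list \<Rightarrow> (nat \<Rightarrow> nat) pmf" where
  "private_rank_aggregation \<epsilon> \<delta> m Ps =
     mix_pmf \<delta> (return_pmf (kemeny_ranking m Ps))
       (gibbs_pmf (rankings m) (total_kendall m Ps) (\<epsilon> / (2 * (real m ^ 2 + 1))))"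

lemma set_pmf_private_rank_aggregation:
  "set_pmf (private_rank_aggregation \<epsilon> \<delta> m Ps) \<subseteq> rankings m"
  using set_pmf_mix_pmf_subset kemeny_ranking_in_rankings finite_rankings rankings_nonempty
  by (fastforce simp: private_rank_aggregation_def set_pmf_gibbs_pmf)

lemma private_rank_aggregation_dp:
  assumes "0 \<le> \<epsilon>" and "0 \<le> \<delta>" and "\<delta> \<le> 1"
  shows "differentially_private \<epsilon> \<delta> m n (private_rank_aggregation \<epsilon> \<delta> m)"
  unfolding differentially_private_def
proof (intro allI impI)
  fix Ps Qs S
  assume "neighboring Ps Qs"
  define \<beta> where "\<beta> = \<epsilon> / (2 * (real m ^ 2 + 1))"
  have "0 \<le> \<beta>"
    using assms(1) by (simp add: \<beta>_def)
  have "0 < real m ^ 2 + 1"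
    by (simp add: add_nonneg_pos)
  then have "2 * \<beta> * real m ^ 2 = \<epsilon> * (real m ^ 2 / (real m ^ 2 + 1))"
    by (simp add: \<beta>_def field_simps)
  also have "\<dots> \<le> \<epsilon>"
    using assms(1) \<open>0 < real m ^ 2 + 1\<close> by (intro mult_left_le) (simp_all add: pos_divide_le_eq)
  finally have "exp (2 * \<beta> * real m ^ 2) \<le> exp \<epsilon>"
    by simp
  then have "pmf (gibbs_pmf (rankings m) (total_kendall m Ps) \<beta>) s
      \<le> exp \<epsilon> * pmf (gibbs_pmf (rankings m) (total_kendall m Qs) \<beta>) s" for s
    using pmf_gibbs_pmf_le_exp[OF finite_rankings _ \<open>0 \<le> \<beta>\<close> total_kendall_neighboring[OF \<open>neighboring Ps Qs\<close>]]
      rankings_nonempty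
    by (fastforce intro: order.trans mult_right_mono)
  then show "measure_pmf.prob (private_rank_aggregation \<epsilon> \<delta> m Ps) S
      \<le> exp \<epsilon> * measure_pmf.prob (private_rank_aggregation \<epsilon> \<delta> m Qs) S + \<delta>"
    unfolding private_rank_aggregation_def \<beta>_def[symmetric]
    using assms(2,3) finite_rankings rankings_nonempty
    by (intro prob_mix_pmf_le) (auto simp: set_pmf_gibbs_pmf)
qed

lemma gibbs_total_kendall_partition_le:
  assumes "valid_input m n Ps" and "p \<in> rankings m" and "0 \<le> \<beta>" and "1 \<le> L"
  shows "gibbs_partition (rankings m) (total_kendall m Ps) (\<beta> / L)
    \<le> real L ^ m * exp (\<beta> * total_kendall m Ps p * (1 + 1 / L))
        * gibbs_partition (rankings m) (total_kendall m Ps) \<beta>"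
proof -
  let ?Z = "gibbs_partition (rankings m) (total_kendall m Ps)" and ?D = "total_kendall m Ps p"
  define t where "t = exp (- (\<beta> / L) * n)"
  have near: "\<And>s. s \<in> rankings m \<Longrightarrow> \<bar>total_kendall m Ps s - real n * real (kendall m s p)\<bar> \<le> ?D"
    by (rule total_kendall_near_center[OF assms(1,2)])
  have "0 \<le> t" "t \<le> 1"
    using assms(3,4) by (auto simp: t_def)
  have "t ^ L = exp (- \<beta> * n)"
    using assms(4) by (simp add: t_def exp_of_nat2_mult[symmetric])
  have "?Z (\<beta> / L) \<le> exp (\<beta> / L * ?D) * mahonian_gf m t"
    using gibbs_partition_bounds(2)[where \<beta> = "\<beta> / L" and R = "rankings m" and S = "total_kendall m Ps"
        and c = "real n" and K = "\<lambda>s. kendall m s p", OF _ near] assms(3)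
    by (simp add: t_def sum_power_kendall[OF assms(2)])
  also have "\<dots> \<le> exp (\<beta> / L * ?D) * (real L ^ m * mahonian_gf m (t ^ L))"
    using mahonian_gf_le_power[OF \<open>0 \<le> t\<close> \<open>t \<le> 1\<close> assms(4)] by simp
  also have "\<dots> \<le> exp (\<beta> / L * ?D) * (real L ^ m * (exp (\<beta> * ?D) * ?Z \<beta>))"
  proof -
    have "exp (- \<beta> * ?D) * mahonian_gf m (t ^ L) \<le> ?Z \<beta>"
      using gibbs_partition_bounds(1)[where \<beta> = \<beta> and R = "rankings m" and S = "total_kendall m Ps"
          and c = "real n" and K = "\<lambda>s. kendall m s p", OF _ near] assms(3)
      by (simp add: \<open>t ^ L = exp (- \<beta> * n)\<close> sum_power_kendall[OF assms(2)])
    then have "mahonian_gf m (t ^ L) \<le> exp (\<beta> * ?D) * ?Z \<beta>"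
      by (simp add: exp_minus field_simps)
    then show ?thesis
      by (simp add: mult_left_mono)
  qed
  also have "\<dots> = real L ^ m * exp (\<beta> * ?D * (1 + 1 / L)) * ?Z \<beta>"
    by (simp add: algebra_simps mult_exp_exp)
  finally show ?thesis .
qed

lemma gibbs_total_kendall_expectation_le:
  assumes "valid_input m n Ps" and "p \<in> rankings m" and "0 < \<beta>" and "2 \<le> L"
  shows "measure_pmf.expectation (gibbs_pmf (rankings m) (total_kendall m Ps) \<beta>) (total_kendall m Ps)
    \<le> (real L + 1) / (real L - 1) * total_kendall m Ps p + 2 * real m * ln L / \<beta>"
proof -
  let ?Z = "gibbs_partition (rankings m) (total_kendall m Ps)" and ?D = "total_kendall m Ps p"
  let ?E = "measure_pmf.expectation (gibbs_pmf (rankings m) (total_kendall m Ps) \<beta>) (total_kendall m Ps)"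
  define \<theta> where "\<theta> = \<beta> * (real L - 1) / L"
  have L: "0 < real L" "real L - 1 \<noteq> 0"
    using assms(4) by simp_all
  have "0 < \<theta>"
    using assms(3,4) by (simp add: \<theta>_def)
  have Z: "0 < ?Z \<beta>" "0 < ?Z (\<beta> / L)"
    using finite_rankings rankings_nonempty by (auto intro: gibbs_partition_pos)
  have "\<beta> - \<theta> = \<beta> / L"
    using L by (simp add: \<theta>_def field_simps)
  then have "\<theta> * ?E \<le> ln (?Z (\<beta> / L) / ?Z \<beta>)"
    using gibbs_expectation_le_ln_partition_ratio[OF finite_rankings rankings_nonempty,
        where S = "total_kendall m Ps" and \<beta> = \<beta> and \<theta> = \<theta>]
    by simp
  also have "\<dots> \<le> ln (real L ^ m * exp (\<beta> * ?D * (1 + 1 / L)))"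
    using gibbs_total_kendall_partition_le[OF assms(1,2), of \<beta> L] assms(3,4) Z
    by (intro ln_mono) (simp_all add: pos_divide_le_eq)
  also have "\<dots> = m * ln L + \<beta> * ?D * (1 + 1 / L)"
    using L by (simp add: ln_mult ln_realpow)
  also have "\<beta> * ?D * (1 + 1 / L) = \<theta> * ((real L + 1) / (real L - 1) * ?D)"
    using L by (simp add: \<theta>_def field_simps)
  also have "m * ln L \<le> \<theta> * (2 * real m * ln L / \<beta>)"
  proof -
    have "1 \<le> 2 * (real L - 1) / L"
      using assms(4) L by (simp add: field_simps)
    moreover have "0 \<le> m * ln L"
      using assms(4) by simp
    ultimately have "m * ln L \<le> 2 * (real L - 1) / L * (m * ln L)"
      using mult_right_mono by fastforce
    also have "\<dots> = \<theta> * (2 * real m * ln L / \<beta>)"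
      using assms(3) by (simp add: \<theta>_def)
    finally show ?thesis .
  qed
  finally have "\<theta> * ?E \<le> \<theta> * ((real L + 1) / (real L - 1) * ?D + 2 * real m * ln L / \<beta>)"
    by (simp add: distrib_left)
  then show ?thesis
    using \<open>0 < \<theta>\<close> by simp
qed

lemma real_mult_square_add_one_le: "real m * (real m ^ 2 + 1) \<le> 2 * real m ^ 3"
proof (cases "m = 0")
  case False
  then have "real m * 1 \<le> real m * real m ^ 2"
    by (intro mult_left_mono) simp_all
  then show ?thesis
    by (simp add: power3_eq_cube power2_eq_square algebra_simps)
qed simp

lemma private_rank_aggregation_expectation_le:
  assumes "valid_input m n Ps" and "0 < \<epsilon>" and "0 \<le> \<delta>" and "\<delta> \<le> 1" and "2 \<le> L"
  shows "measure_pmf.expectation (private_rank_aggregation \<epsilon> \<delta> m Ps) (\<lambda>s. avg_kendall m s Ps)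
    \<le> \<delta> * OPT m Ps + (1 - \<delta>) * ((real L + 1) / (real L - 1) * OPT m Ps
         + 8 * ln L * (real m ^ 3 / (\<epsilon> * real n)))"
proof -
  define \<beta> where "\<beta> = \<epsilon> / (2 * (real m ^ 2 + 1))"
  let ?G = "gibbs_pmf (rankings m) (total_kendall m Ps) \<beta>" and ?p = "kemeny_ranking m Ps"
  have len: "length Ps = n"
    using assms(1) by (simp add: valid_input_def)
  have "0 < real m ^ 2 + 1"
    by (simp add: add_nonneg_pos)
  then have "0 < \<beta>"
    unfolding \<beta>_def using assms(2) by simp
  have "measure_pmf.expectation ?G (\<lambda>s. avg_kendall m s Ps)
      = measure_pmf.expectation ?G (total_kendall m Ps) / n"
    by (simp add: avg_kendall_eq_total_kendall len)
  also have "\<dots> \<le> ((real L + 1) / (real L - 1) * total_kendall m Ps ?p + 2 * real m * ln L / \<beta>) / n"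
    using gibbs_total_kendall_expectation_le[OF assms(1) kemeny_ranking_in_rankings \<open>0 < \<beta>\<close> assms(5)]
    by (simp add: divide_right_mono)
  also have "\<dots> = (real L + 1) / (real L - 1) * OPT m Ps + 2 * real m * ln L / \<beta> / n"
    by (simp add: OPT_eq_kemeny_ranking avg_kendall_eq_total_kendall len add_divide_distrib)
  also have "2 * real m * ln L / \<beta> / n = 4 * ln L * (real m * (real m ^ 2 + 1)) / (\<epsilon> * n)"
    using assms(2) \<open>0 < real m ^ 2 + 1\<close> by (simp add: \<beta>_def field_simps)
  also have "\<dots> \<le> 4 * ln L * (2 * real m ^ 3) / (\<epsilon> * n)"
    using real_mult_square_add_one_le[of m] assms(2,5)
    by (intro divide_right_mono mult_left_mono) simp_all
  also have "\<dots> = 8 * ln L * (real m ^ 3 / (\<epsilon> * real n))"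
    by simp
  finally have "measure_pmf.expectation ?G (\<lambda>s. avg_kendall m s Ps)
      \<le> (real L + 1) / (real L - 1) * OPT m Ps + 8 * ln L * (real m ^ 3 / (\<epsilon> * real n))"
    by simp
  moreover have "measure_pmf.expectation (private_rank_aggregation \<epsilon> \<delta> m Ps) (\<lambda>s. avg_kendall m s Ps)
      = \<delta> * OPT m Ps + (1 - \<delta>) * measure_pmf.expectation ?G (\<lambda>s. avg_kendall m s Ps)"
    unfolding private_rank_aggregation_def \<beta>_def[symmetric]
    using assms(3,4) finite_rankings rankings_nonempty
    by (simp add: expectation_mix_pmf set_pmf_gibbs_pmf OPT_eq_kemeny_ranking)
  ultimately show ?thesis
    using assms(4) by (simp add: mult_left_mono)
qed

lemma one_minus_le_sqrt_ln_inverse: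
  assumes "0 < \<delta>" and "\<delta> < 1"
  shows "1 - \<delta> \<le> sqrt (ln (1 / \<delta>))"
proof (rule real_le_rsqrt)
  have "(1 - \<delta>)\<^sup>2 \<le> 1 - \<delta>"
    using assms by (simp add: power2_eq_square mult_left_le)
  also have "\<dots> \<le> ln (1 / \<delta>)"
    using ln_le_minus_one[of \<delta>] assms by (simp add: ln_div)
  finally show "(1 - \<delta>)\<^sup>2 \<le> ln (1 / \<delta>)" .
qed

lemma private_rank_aggregation_approximation:
  assumes "2 \<le> L" and "0 < \<epsilon>" and "0 < \<delta>" and "\<delta> < 1"
  shows "approximation ((real L + 1) / (real L - 1))
           (8 * ln L * (real m ^ 3 / (\<epsilon> * real n)) * sqrt (ln (1 / \<delta>)))
           m n (private_rank_aggregation \<epsilon> \<delta> m)"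
  unfolding approximation_def
proof (intro allI impI conjI)
  fix Ps assume "valid_input m n Ps"
  show "set_pmf (private_rank_aggregation \<epsilon> \<delta> m Ps) \<subseteq> rankings m"
    by (rule set_pmf_private_rank_aggregation)
  define r where "r = (real L + 1) / (real L - 1)"
  define B where "B = 8 * ln L * (real m ^ 3 / (\<epsilon> * real n))"
  define opt where "opt = OPT m Ps"
  have "measure_pmf.expectation (private_rank_aggregation \<epsilon> \<delta> m Ps) (\<lambda>s. avg_kendall m s Ps)
      \<le> \<delta> * opt + (1 - \<delta>) * (r * opt + B)"
    unfolding r_def B_def opt_def using assms \<open>valid_input m n Ps\<close>
    by (intro private_rank_aggregation_expectation_le) simp_all
  also have "\<dots> = r * opt + (1 - \<delta>) * B - \<delta> * ((r - 1) * opt)"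
    by algebra
  also have "\<dots> \<le> r * opt + B * sqrt (ln (1 / \<delta>))"
  proof -
    have "0 \<le> B"
      using assms(1,2) by (simp add: B_def)
    then have "(1 - \<delta>) * B \<le> B * sqrt (ln (1 / \<delta>))"
      using one_minus_le_sqrt_ln_inverse[OF assms(3,4)] by (simp add: mult.commute mult_left_mono)
    moreover have "0 \<le> \<delta> * ((r - 1) * opt)"
      using assms(1,3) OPT_nonneg by (simp add: r_def opt_def field_simps)
    ultimately show ?thesis by linarith
  qed
  finally show "measure_pmf.expectation (private_rank_aggregation \<epsilon> \<delta> m Ps) (\<lambda>s. avg_kendall m s Ps)
      \<le> r * opt + B * sqrt (ln (1 / \<delta>))" .
qed

lemma approximation_mono:
  assumes "\<alpha> \<le> \<alpha>'" and "approximation \<alpha> b m n M"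
  shows "approximation \<alpha>' b m n M"
  unfolding approximation_def
proof (intro allI impI)
  fix Ps assume "valid_input m n Ps"
  then have "set_pmf (M Ps) \<subseteq> rankings m"
    and "measure_pmf.expectation (M Ps) (\<lambda>s. avg_kendall m s Ps) \<le> \<alpha> * OPT m Ps + b"
    using assms(2) unfolding approximation_def by blast+
  moreover have "\<alpha> * OPT m Ps \<le> \<alpha>' * OPT m Ps"
    by (rule mult_right_mono[OF assms(1) OPT_nonneg])
  ultimately show "set_pmf (M Ps) \<subseteq> rankings m
      \<and> measure_pmf.expectation (M Ps) (\<lambda>s. avg_kendall m s Ps) \<le> \<alpha>' * OPT m Ps + b"
    by linarith
qed

lemma exists_ratio_le:
  assumes "0 < \<xi>"
  obtains L :: nat where "2 \<le> L" and "(real L + 1) / (real L - 1) \<le> 1 + \<xi>"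
proof -
  obtain L :: nat where L: "1 + 2 / \<xi> < L"
    using reals_Archimedean2 by blast
  moreover have "0 < 2 / \<xi>"
    using assms by simp
  ultimately have "1 < L"
    by linarith
  have "2 < \<xi> * (real L - 1)"
    using L assms by (simp add: field_simps)
  then have "real L + 1 \<le> (1 + \<xi>) * (real L - 1)"
    by (simp add: algebra_simps)
  then have "(real L + 1) / (real L - 1) \<le> 1 + \<xi>"
    using \<open>1 < L\<close> by (simp add: pos_divide_le_eq)
  moreover have "2 \<le> L"
    using \<open>1 < L\<close> by simp
  ultimately show ?thesis
    using that by blast
qed

theorem corollary2:
  fixes \<xi> :: real
  assumes "\<xi> > 0"
  shows "\<exists>C :: real. \<forall>(\<epsilon>::real) (\<delta>::real). \<epsilon> > 0 \<longrightarrow> 0 < \<delta> \<longrightarrow> \<delta> < 1 \<longrightarrow>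
    (\<exists>M :: nat \<Rightarrow> (nat \<Rightarrow> nat) list \<Rightarrow> (nat \<Rightarrow> nat) pmf.
       \<forall>m n. n \<ge> 1 \<longrightarrow>
         differentially_private \<epsilon> \<delta> m n (M m) \<and>
         approximation (1 + \<xi>) (C * (real m ^ 3 / (\<epsilon> * real n)) * sqrt (ln (1 / \<delta>))) m n (M m))"
proof -
  obtain L :: nat where "2 \<le> L" and ratio: "(real L + 1) / (real L - 1) \<le> 1 + \<xi>"
    using exists_ratio_le[OF assms] .
  have guarantees: "differentially_private \<epsilon> \<delta> m n (private_rank_aggregation \<epsilon> \<delta> m)
      \<and> approximation (1 + \<xi>) (8 * ln L * (real m ^ 3 / (\<epsilon> * real n)) * sqrt (ln (1 / \<delta>)))
          m n (private_rank_aggregation \<epsilon> \<delta> m)"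
    if "0 < \<epsilon>" and "0 < \<delta>" and "\<delta> < 1" for \<epsilon> \<delta> :: real and m n :: nat
    using that
    by (intro conjI private_rank_aggregation_dp
        approximation_mono[OF ratio private_rank_aggregation_approximation[OF \<open>2 \<le> L\<close> that]])
       simp_all
  show ?thesis
  proof (intro exI[of _ "8 * ln L"] allI impI)
    fix \<epsilon> \<delta> :: real
    assume "\<epsilon> > 0" and "0 < \<delta>" and "\<delta> < 1"
    then show "\<exists>M :: nat \<Rightarrow> (nat \<Rightarrow> nat) list \<Rightarrow> (nat \<Rightarrow> nat) pmf. \<forall>m n. n \<ge> 1 \<longrightarrow>
        differentially_private \<epsilon> \<delta> m n (M m) \<and>
        approximation (1 + \<xi>) (8 * ln L * (real m ^ 3 / (\<epsilon> * real n)) * sqrt (ln (1 / \<delta>))) m n (M m)"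
      using guarantees by (intro exI[of _ "private_rank_aggregation \<epsilon> \<delta>"]) simp
  qed
qed

end
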